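(* Let $t=[1\ 0\ 0\ 0\ 0\ 0\ 0\ 0]$ (row vector), $u=[1\ 1\ 1\ 1\ 1\ 2\ 1\ 4]^T$ (column vector), and \[\gamma(0)=\begin{bmatrix} 0&1&0&0&0&0&0&0\\ 0&0&0&1&0&0&0&0\\ -1&1&0&1&0&0&0&0\\ 0&0&0&0&1&0&0&0\\ 0&0&0&0&0&0&1&0\\ -1&0&0&2&1&0&0&0\\ 1&-1&0&-3&3&0&1&0\\ -1&-1&0&2&3&0&1&0 \end{bmatrix},\quad \gamma(1)=\begin{bmatrix} 0&0&1&0&0&0&0&0\\ 0&0&1&0&0&0&0&0\\ 0&0&0&0&0&0&0&0\\ 0&0&0&0&0&1&0&0\\ 0&0&0&0&0&1&0&0\\ 0&0&0&0&0&0&0&0\\ 0&0&0&0&0&0&0&1\\ 0&0&0&0&0&0&0&0 \end{bmatrix},\] extended to a monoid morphism $\gamma:\{0,1\}^*\to\mathbb{Z}^{8\times 8}$ by $\gamma(w_1w_2\cdots w_m)=\gamma(w_1)\gamma(w_2)\cdots\gamma(w_m)$. Then for every $n\geq 0$, if $z=z_1\cdots z_m$ is the canonical Fibonacci representation of $n$ and $z^R=z_m\cdots z_1$ is its reversal, we have $t\,\gamma(z^R)\,u=V(n)$. In particular, $V$ is Fibonacci-regular.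
   Context: Fibonacci numbers: $F_0=0$, $F_1=1$, $F_{m+2}=F_{m+1}+F_m$. For a word $k_m\cdots k_0$ of nonnegative integer digits, $[k_m\cdots k_0]_F=\sum_{i=0}^m k_iF_{i+2}$. The canonical Fibonacci representation of $n\geq 0$ is the unique binary word $z$ with no leading zero and no two consecutive $1$s such that $[z]_F=n$ (the empty word for $n=0$). Standard Fibonacci words: $f_{-1}=b$, $f_0=a$, $f_{m+1}=f_mf_{m-1}$. The Fibonacci word ${\bf f}=\lim f_m$, with prefix of length $j$ denoted ${\bf f}(0..j]$. $V(N)$ is the number of factorizations of ${\bf f}(0..N]$ as $f_m^{k_m}\cdots f_0^{k_0}$ with all $k_i\geq 0$ (into standard words $f_i$, $i\geq0$, in non-strictly decreasing order of index), counted up to leading zero exponents; $V(0)=1$. A sequence $s$ is Fibonacci-regular if there are a row vector $v$, a column vector $w$ and a matrix-valued morphism $\rho$ on $\{0,1\}^*$ with $s([z]_F)=v\rho(z)w$ for all canonical representations $z$. *)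

theory Defs
  imports "HOL-Number_Theory.Fib" "Jordan_Normal_Form.Matrix"
begin

text \<open>Binary words are lists of booleans written most significant digit first
  (True = digit 1). [k_m ... k_0]_F = sum k_i F_(i+2).\<close>

definition fib_val :: "bool list \<Rightarrow> nat" where
  "fib_val z = (\<Sum>i<length z. (if rev z ! i then fib (i + 2) else 0))"

definition canonical_fib_rep :: "bool list \<Rightarrow> nat \<Rightarrow> bool" where
  "canonical_fib_rep z n \<longleftrightarrow>
     (z = [] \<or> hd z) \<and>
     (\<forall>i. Suc i < length z \<longrightarrow> \<not> (z ! i \<and> z ! Suc i)) \<and>
     fib_val z = n"

datatype letter = a | b

text \<open>fstd' (m+1) is the standard word f_m; fstd' 0 = f_(-1) = b.\<close>
fun fstd' :: "nat \<Rightarrow> letter list" where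
  "fstd' 0 = [b]"
| "fstd' (Suc 0) = [a]"
| "fstd' (Suc (Suc m)) = fstd' (Suc m) @ fstd' m"

definition fstd :: "nat \<Rightarrow> letter list" where
  "fstd m = fstd' (Suc m)"

text \<open>The infinite Fibonacci word as the limit of the f_m: its i-th letter is the
  i-th letter of f_i (which has length F_(i+2) > i, and each f_m is a prefix of f_(m+1)).\<close>
definition fibword :: "nat \<Rightarrow> letter" where
  "fibword i = fstd i ! i"

definition fib_prefix :: "nat \<Rightarrow> letter list" where
  "fib_prefix N = map fibword [0..<N]"

text \<open>For ks = [k_0, ..., k_m], the word f_m^(k_m) ... f_0^(k_0).\<close>
definition fact_word :: "nat list \<Rightarrow> letter list" where
  "fact_word ks = concat (rev (map (\<lambda>i. concat (replicate (ks ! i) (fstd i))) [0..<length ks]))"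

text \<open>Factorizations counted up to leading zero exponents: exponent lists with
  nonzero top exponent (the empty list being the empty factorization).\<close>
definition V :: "nat \<Rightarrow> nat" where
  "V N = card {ks. (ks = [] \<or> last ks \<noteq> 0) \<and> fact_word ks = fib_prefix N}"

definition mat_morph :: "nat \<Rightarrow> (bool \<Rightarrow> int mat) \<Rightarrow> bool list \<Rightarrow> int mat" where
  "mat_morph d \<rho> w = foldr (\<lambda>c M. \<rho> c * M) w (1\<^sub>m d)"

definition fib_regular :: "(nat \<Rightarrow> int) \<Rightarrow> bool" where
  "fib_regular s \<longleftrightarrow> (\<exists>d v w \<rho>. v \<in> carrier_mat 1 d \<and> w \<in> carrier_mat d 1 \<and>
      (\<forall>c. \<rho> c \<in> carrier_mat d d) \<and>
      (\<forall>z n. canonical_fib_rep z n \<longrightarrow> s n = (v * mat_morph d \<rho> z * w) $$ (0, 0)))"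

definition t_vec :: "int mat" where
  "t_vec = mat_of_rows_list 8 [[1,0,0,0,0,0,0,0]]"

definition u_vec :: "int mat" where
  "u_vec = mat_of_cols_list 8 [[1,1,1,1,1,2,1,4]]"

definition gamma0 :: "int mat" where
  "gamma0 = mat_of_rows_list 8
    [[ 0, 1,0, 0,0,0,0,0],
     [ 0, 0,0, 1,0,0,0,0],
     [-1, 1,0, 1,0,0,0,0],
     [ 0, 0,0, 0,1,0,0,0],
     [ 0, 0,0, 0,0,0,1,0],
     [-1, 0,0, 2,1,0,0,0],
     [ 1,-1,0,-3,3,0,1,0],
     [-1,-1,0, 2,3,0,1,0]]"

definition gamma1 :: "int mat" where
  "gamma1 = mat_of_rows_list 8
    [[0,0,1,0,0,0,0,0],
     [0,0,1,0,0,0,0,0],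
     [0,0,0,0,0,0,0,0],
     [0,0,0,0,0,1,0,0],
     [0,0,0,0,0,1,0,0],
     [0,0,0,0,0,0,0,0],
     [0,0,0,0,0,0,0,1],
     [0,0,0,0,0,0,0,0]]"

definition gamma :: "bool \<Rightarrow> int mat" where
  "gamma c = (if c then gamma1 else gamma0)"

end

(* A factorization f_m^(k_m) ... f_0^(k_0) of a word x with k_0 = 0 is the image, under the
   Fibonacci morphism phi: a -> ab, b -> a (which maps f_i to f_(i+1)), of a factorization of the
   preimage of x; one with k_0 > 0 is a factorization of x with its final a removed.  So the number
   N(x) of factorizations satisfies N(x) = N(phi^-1 x) + N(x a^-1).  If z is the canonical
   representation of n, the prefix of length n of the Fibonacci word is f_m^(z_m) ... f_0^(z_0),
   and appending a digit c to z turns this prefix x into phi(x) a^c.  The recursion for N then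
   gives linear relations between the values of V at the extensions of z by the suffixes
   [], 0, 1, 00, 000, 100, 0000, 10000 (taken as 0 when the extension is not canonical), and
   gamma(c) is the matrix by which appending c acts on this vector of eight values. *)

theory Submission
  imports Defs "HOL-Library.Sublist"
begin

section \<open>The Fibonacci morphism\<close>

fun fib_morph :: "letter list \<Rightarrow> letter list" where
  "fib_morph [] = []"
| "fib_morph (a # w) = a # b # fib_morph w"
| "fib_morph (b # w) = a # fib_morph w"

lemma fib_morph_append [simp]: "fib_morph (u @ v) = fib_morph u @ fib_morph v"
  by (induction u rule: fib_morph.induct) auto

lemma fib_morph_eq_Nil_iff [simp]:
  "fib_morph w = [] \<longleftrightarrow> w = []" "[] = fib_morph w \<longleftrightarrow> w = []"
  by (cases w rule: fib_morph.cases; simp)+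

lemma fib_morph_neq_b_Cons [simp]: "fib_morph w \<noteq> b # u" "b # u \<noteq> fib_morph w"
  by (cases w rule: fib_morph.cases; simp)+

lemma inj_fib_morph: "inj fib_morph"
proof (rule injI)
  show "fib_morph u = fib_morph v \<Longrightarrow> u = v" for u v
  proof (induction u arbitrary: v rule: fib_morph.induct)
    case 1
    then show ?case by simp
  next
    case (2 w)
    then show ?case by (cases v rule: fib_morph.cases) auto
  next
    case (3 w)
    then show ?case by (cases v rule: fib_morph.cases) auto
  qed
qed

lemma fib_morph_eq_snoc_a:
  assumes "fib_morph x = u @ [a]"
  obtains x' where "x = x' @ [b]" "u = fib_morph x'"
proof (cases x rule: rev_cases)
  case (snoc x' c)
  with assms that show ?thesis by (cases c) auto
qed (use assms in simp)

lemma fib_morph_eq_snoc_b: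
  assumes "fib_morph x = u @ [b]"
  obtains x' where "x = x' @ [a]" "u = fib_morph x' @ [a]"
proof (cases x rule: rev_cases)
  case (snoc x' c)
  with assms that show ?thesis by (cases c) auto
qed (use assms in simp)

lemma fib_morph_neq_snoc_bb: "fib_morph x \<noteq> u @ [b, b]"
proof
  assume "fib_morph x = u @ [b, b]"
  then obtain x' where "u @ [b] = fib_morph x' @ [a]"
    by (metis append.assoc append_Cons append_Nil fib_morph_eq_snoc_b)
  then show False by simp
qed

lemma fib_morph_concat: "fib_morph (concat ws) = concat (map fib_morph ws)"
  by (induction ws) auto

lemma length_fib_morph_ge: "length w \<le> length (fib_morph w)"
  by (induction w rule: fib_morph.induct) auto

lemma length_fib_morph_gt: "a \<in> set w \<Longrightarrow> length w < length (fib_morph w)"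
  by (induction w rule: fib_morph.induct) (auto simp: length_fib_morph_ge less_Suc_eq_le)

lemma a_in_fib_morph: "w \<noteq> [] \<Longrightarrow> a \<in> set (fib_morph w)"
  by (cases w rule: fib_morph.cases) auto

section \<open>Standard words\<close>

lemma fstd_0: "fstd 0 = [a]"
  by (simp add: fstd_def)

lemma fstd_Suc_Suc: "fstd (Suc (Suc m)) = fstd (Suc m) @ fstd m"
  by (simp add: fstd_def)

lemma fstd_Suc: "fstd (Suc m) = fib_morph (fstd m)"
proof -
  have "fib_morph (fstd' k) = fstd' (Suc k)" for k
    by (induction k rule: fstd'.induct) auto
  then show ?thesis by (simp add: fstd_def)
qed

lemma length_fstd: "length (fstd m) = fib (m + 2)"
  by (induction m rule: induct_nat_012) (simp_all add: fstd_def numeral_eq_Suc)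

lemma less_length_fstd: "m < length (fstd m)"
proof (induction m)
  case (Suc m)
  have "0 < fib (Suc m)" by (simp add: fib_neq_0_nat)
  then show ?case using Suc by (simp add: length_fstd numeral_eq_Suc)
qed (simp add: fstd_0)

lemma prefix_fstd_Suc: "prefix (fstd m) (fstd (Suc m))"
  by (cases m) (simp_all add: fstd_def)

lemma prefix_fstd_mono: "m \<le> m' \<Longrightarrow> prefix (fstd m) (fstd m')"
  by (induction m' rule: dec_induct) (auto intro: prefix_order.trans prefix_fstd_Suc)

lemma prefix_nth: "prefix xs ys \<Longrightarrow> i < length xs \<Longrightarrow> ys ! i = xs ! i"
  by (auto elim!: prefixE simp: nth_append)

lemma fib_prefix_eq_take:
  assumes "n \<le> length (fstd m)"
  shows "fib_prefix n = take n (fstd m)"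
proof (rule nth_equalityI)
  show "length (fib_prefix n) = length (take n (fstd m))"
    using assms by (simp add: fib_prefix_def)
next
  fix i assume "i < length (fib_prefix n)"
  then have "i < n" by (simp add: fib_prefix_def)
  have "fstd i ! i = fstd m ! i"
  proof (cases "i \<le> m")
    case True
    then show ?thesis by (metis prefix_nth prefix_fstd_mono less_length_fstd)
  next
    case False
    then have "prefix (fstd m) (fstd i)" by (simp add: prefix_fstd_mono)
    with \<open>i < n\<close> assms show ?thesis by (simp add: prefix_nth)
  qed
  with \<open>i < n\<close> show "fib_prefix n ! i = take n (fstd m) ! i"
    by (simp add: fib_prefix_def fibword_def)
qed

section \<open>Counting factorizations\<close>

lemma fact_word_Cons: "fact_word (k # ks) = fib_morph (fact_word ks) @ replicate k a"
proof -
  define g where "g = (\<lambda>i. concat (replicate ((k # ks) ! i) (fstd i)))"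
  have "[0..<length (k # ks)] = 0 # map Suc [0..<length ks]"
    by (simp add: map_Suc_upt upt_conv_Cons del: upt_Suc)
  then have "fact_word (k # ks) = concat (rev (map (g \<circ> Suc) [0..<length ks])) @ g 0"
    by (simp add: fact_word_def g_def del: upt_Suc)
  also have "concat (rev (map (g \<circ> Suc) [0..<length ks])) = fib_morph (fact_word ks)"
    by (simp add: fact_word_def g_def fib_morph_concat fstd_Suc rev_map comp_def)
  finally show ?thesis
    by (simp add: g_def fstd_0)
qed

lemma fact_word_Cons_Suc: "fact_word (Suc k # ks) = fact_word (k # ks) @ [a]"
  by (simp add: fact_word_Cons replicate_append_same)

lemma fact_word_Nil [simp]: "fact_word [] = []"
  by (simp add: fact_word_def)

lemma a_in_fact_word: "ks \<noteq> [] \<Longrightarrow> last ks \<noteq> 0 \<Longrightarrow> a \<in> set (fact_word ks)"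
proof (induction ks)
  case (Cons k ks)
  show ?case
  proof (cases "ks = []")
    case False
    with Cons have "fact_word ks \<noteq> []" by auto
    then show ?thesis by (simp add: fact_word_Cons a_in_fib_morph)
  qed (use Cons.prems in \<open>simp add: fact_word_Cons\<close>)
qed simp

lemma length_le_length_fact_word:
  "ks \<noteq> [] \<Longrightarrow> last ks \<noteq> 0 \<Longrightarrow> length ks \<le> length (fact_word ks)"
proof (induction ks)
  case (Cons k ks)
  then show ?case
    using a_in_fact_word[of ks] length_fib_morph_gt[of "fact_word ks"]
    by (cases "ks = []") (auto simp: fact_word_Cons)
qed simp

lemma nth_le_length_fact_word: "i < length ks \<Longrightarrow> ks ! i \<le> length (fact_word ks)"
proof (induction ks arbitrary: i)
  case (Cons k ks)
  then show ?case
    using length_fib_morph_ge[of "fact_word ks"] by (cases i) (fastforce simp: fact_word_Cons)+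
qed simp

definition factorizations :: "letter list \<Rightarrow> nat list set" where
  "factorizations x = {ks. (ks = [] \<or> last ks \<noteq> 0) \<and> fact_word ks = x}"

definition nfact :: "letter list \<Rightarrow> nat" where
  "nfact x = card (factorizations x)"

lemma V_eq_nfact: "V n = nfact (fib_prefix n)"
  by (simp add: V_def nfact_def factorizations_def)

lemma finite_factorizations: "finite (factorizations x)"
proof (rule finite_subset)
  show "factorizations x \<subseteq> {ks. set ks \<subseteq> {0..length x} \<and> length ks \<le> Suc (length x)}"
  proof
    fix ks assume "ks \<in> factorizations x"
    then have ks: "ks = [] \<or> last ks \<noteq> 0" "fact_word ks = x" by (simp_all add: factorizations_def)
    have "set ks \<subseteq> {0..length x}"
      using nth_le_length_fact_word[of _ ks] ks(2) by (auto simp: in_set_conv_nth)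
    moreover have "length ks \<le> Suc (length x)"
      using length_le_length_fact_word[of ks] ks by (cases "ks = []") auto
    ultimately show "ks \<in> {ks. set ks \<subseteq> {0..length x} \<and> length ks \<le> Suc (length x)}" by simp
  qed
  show "finite {ks. set ks \<subseteq> {0..length x} \<and> length ks \<le> Suc (length x)}"
    by (rule finite_lists_length_le) simp
qed

lemma factorizations_Nil: "factorizations [] = {[]}"
proof -
  have "ks = []" if "ks \<in> factorizations []" for ks
    using that a_in_fact_word[of ks] by (auto simp: factorizations_def)
  then show ?thesis by (auto simp: factorizations_def)
qed

lemma nfact_Nil [simp]: "nfact [] = 1"
  by (simp add: nfact_def factorizations_Nil)

lemma head_zero_factorizations_fib_morph:
  assumes "y \<noteq> []"
  shows "{ks \<in> factorizations (fib_morph y). hd ks = 0} = Cons 0 ` factorizations y"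
proof safe
  fix ks assume ks: "ks \<in> factorizations (fib_morph y)" "hd ks = 0"
  with assms obtain ks' where ks': "ks = 0 # ks'"
    by (cases ks) (auto simp: factorizations_def)
  with ks have "fact_word ks' = y"
    by (auto simp: factorizations_def fact_word_Cons dest: injD[OF inj_fib_morph])
  with ks ks' assms have "ks' \<in> factorizations y"
    by (auto simp: factorizations_def split: if_splits)
  with ks' show "ks \<in> Cons 0 ` factorizations y" by blast
next
  fix ks assume "ks \<in> factorizations y"
  with assms show "0 # ks \<in> factorizations (fib_morph y)"
    by (auto simp: factorizations_def fact_word_Cons)
qed simp

lemma head_zero_factorizations_empty:
  assumes "x \<notin> range fib_morph"
  shows "{ks \<in> factorizations x. hd ks = 0} = {}"
proof -
  have "x \<noteq> fact_word ks" if "hd ks = 0" for ks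
    using assms that rangeI[of fib_morph "[]"] by (cases ks) (auto simp: fact_word_Cons)
  then show ?thesis by (auto simp: factorizations_def)
qed

fun incr_head :: "nat list \<Rightarrow> nat list" where
  "incr_head [] = [1]"
| "incr_head (k # ks) = Suc k # ks"

lemma inj_on_incr_head: "inj_on incr_head (factorizations y)"
proof (rule inj_onI)
  fix ks ls assume "ks \<in> factorizations y" "ls \<in> factorizations y" "incr_head ks = incr_head ls"
  then show "ks = ls"
    by (cases ks; cases ls) (auto simp: factorizations_def)
qed

lemma head_pos_factorizations_snoc_a:
  "{ks \<in> factorizations (y @ [a]). hd ks \<noteq> 0} = incr_head ` factorizations y"
proof (rule Set.set_eqI, rule iffI)
  fix ks assume "ks \<in> {ks \<in> factorizations (y @ [a]). hd ks \<noteq> 0}"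
  then have ks: "ks \<in> factorizations (y @ [a])" "hd ks \<noteq> 0" by simp_all
  then obtain k ks' where ks': "ks = Suc k # ks'"
    by (cases ks) (auto simp: factorizations_def gr0_conv_Suc)
  with ks have y: "fact_word (k # ks') = y"
    by (auto simp: factorizations_def fact_word_Cons_Suc)
  show "ks \<in> incr_head ` factorizations y"
  proof (cases "k = 0 \<and> ks' = []")
    case True
    then show ?thesis using ks' y by (auto simp: factorizations_Nil fact_word_Cons)
  next
    case False
    then have "k # ks' \<in> factorizations y" using ks ks' y by (auto simp: factorizations_def)
    then show ?thesis using ks' by force
  qed
next
  fix ks assume "ks \<in> incr_head ` factorizations y"
  then obtain ls where "ks = incr_head ls" "ls \<in> factorizations y" by blast
  then show "ks \<in> {ks \<in> factorizations (y @ [a]). hd ks \<noteq> 0}"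
    by (cases ls) (auto simp: factorizations_def fact_word_Cons_Suc fact_word_Cons[of 0])
qed

lemma head_pos_factorizations_empty:
  assumes "x \<noteq> []" "last x \<noteq> a"
  shows "{ks \<in> factorizations x. hd ks \<noteq> 0} = {}"
proof -
  have "x \<noteq> fact_word ks" if "hd ks \<noteq> 0" for ks
    using assms that by (cases ks) (auto simp: fact_word_Cons_Suc gr0_conv_Suc)
  then show ?thesis by (auto simp: factorizations_def)
qed

text \<open>Split by the exponent of \<open>f\<^sub>0 = a\<close>: if it is zero, the factorization is the image of a
  factorization of the preimage under \<open>fib_morph\<close>; otherwise one final \<open>a\<close> can be removed.\<close>

lemma nfact_rec:
  assumes "x \<noteq> []"
  shows "nfact x = (if x \<in> range fib_morph then nfact (the_inv fib_morph x) else 0)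
                 + (if last x = a then nfact (butlast x) else 0)"
proof -
  let ?F0 = "{ks \<in> factorizations x. hd ks = 0}" and ?F1 = "{ks \<in> factorizations x. hd ks \<noteq> 0}"
  have "nfact x = card (?F0 \<union> ?F1)"
    unfolding nfact_def by (rule arg_cong[where f = card]) auto
  also have "\<dots> = card ?F0 + card ?F1"
    using finite_factorizations by (intro card_Un_disjoint) auto
  finally have "nfact x = card ?F0 + card ?F1" .
  moreover have "card ?F0 = (if x \<in> range fib_morph then nfact (the_inv fib_morph x) else 0)"
  proof (cases "x \<in> range fib_morph")
    case True
    then obtain y where "x = fib_morph y" by blast
    with assms show ?thesis
      by (simp add: head_zero_factorizations_fib_morph card_image nfact_def the_inv_f_f[OF inj_fib_morph])
  qed (simp add: head_zero_factorizations_empty)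
  moreover have "card ?F1 = (if last x = a then nfact (butlast x) else 0)"
  proof (cases "last x = a")
    case True
    with assms have "x = butlast x @ [a]" by (metis append_butlast_last_id)
    then show ?thesis using True head_pos_factorizations_snoc_a[of "butlast x"]
      by (simp add: card_image[OF inj_on_incr_head] nfact_def)
  next
    case False
    then show ?thesis
      by (simp only: head_pos_factorizations_empty[OF assms False] card.empty) simp
  qed
  ultimately show ?thesis by simp
qed

lemma nfact_fib_morph_snoc_a: "nfact (fib_morph (x @ [a])) = nfact (x @ [a])"
proof -
  have "last (fib_morph (x @ [a])) = b" by simp
  then show ?thesis
    using nfact_rec[of "fib_morph (x @ [a])"] by (simp add: the_inv_f_f[OF inj_fib_morph] del: fib_morph_append)
qed

lemma nfact_fib_morph_snoc_b: "nfact (fib_morph (x @ [b])) = nfact (x @ [b]) + nfact (fib_morph x)"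
proof -
  have "last (fib_morph (x @ [b])) = a" "butlast (fib_morph (x @ [b])) = fib_morph x" by simp_all
  then show ?thesis
    using nfact_rec[of "fib_morph (x @ [b])"] by (simp add: the_inv_f_f[OF inj_fib_morph] del: fib_morph_append)
qed

lemma nfact_snoc_bb: "nfact (x @ [b, b]) = 0"
proof -
  have "x @ [b, b] \<notin> range fib_morph" using fib_morph_neq_snoc_bb by (metis rangeE)
  then show ?thesis using nfact_rec[of "x @ [b, b]"] by simp
qed

lemma nfact_b: "nfact [b] = 0"
proof -
  have "[b] \<notin> range fib_morph" using fib_morph_neq_b_Cons(2)[of "[]"] by blast
  then show ?thesis using nfact_rec[of "[b]"] by simp
qed

section \<open>The prefixes of the Fibonacci word\<close>

fun rep_word :: "bool list \<Rightarrow> letter list" where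
  "rep_word [] = []"
| "rep_word (c # z) = (if c then fstd (length z) else []) @ rep_word z"

lemma rep_word_snoc: "rep_word (z @ [c]) = fib_morph (rep_word z) @ (if c then [a] else [])"
  by (induction z) (simp_all add: fstd_0 fstd_Suc)

lemma rep_word_append:
  "rep_word (z @ w) = fold (\<lambda>c x. fib_morph x @ (if c then [a] else [])) w (rep_word z)"
proof (induction w arbitrary: z)
  case (Cons c w)
  then show ?case using Cons.IH[of "z @ [c]"] by (simp add: rep_word_snoc)
qed simp

lemma fib_val_Nil [simp]: "fib_val [] = 0"
  by (simp add: fib_val_def)

lemma fib_val_Cons: "fib_val (c # z) = (if c then fib (length z + 2) else 0) + fib_val z"
proof -
  have "fib_val (c # z) = (\<Sum>i<Suc (length z). if (rev z @ [c]) ! i then fib (i + 2) else 0)"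
    by (simp add: fib_val_def)
  also have "\<dots> = fib_val z + (if c then fib (length z + 2) else 0)"
    unfolding fib_val_def by (simp add: nth_append)
  finally show ?thesis by simp
qed

lemma length_rep_word: "length (rep_word z) = fib_val z"
  by (induction z) (auto simp: fib_val_Cons length_fstd)

abbreviation no_adjacent_ones :: "bool list \<Rightarrow> bool" where
  "no_adjacent_ones \<equiv> successively (\<lambda>x y. \<not> (x \<and> y))"

lemma prefix_rep_word_fstd: "no_adjacent_ones z \<Longrightarrow> prefix (rep_word z) (fstd (length z))"
proof (induction z rule: induct_list012)
  case (3 c d z)
  show ?case
  proof (cases c)
    case True
    with "3.prems" have "\<not> d" "no_adjacent_ones z"
      by (auto simp: successively_Cons)
    with True "3.IH"(1) show ?thesis by (simp add: fstd_Suc_Suc)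
  next
    case False
    with "3.prems" "3.IH"(2) show ?thesis
      by (auto intro: prefix_order.trans prefix_fstd_Suc)
  qed
qed (simp_all add: prefix_fstd_Suc)

lemma fib_prefix_rep_word:
  assumes "canonical_fib_rep z n"
  shows "fib_prefix n = rep_word z"
proof -
  from assms have z: "no_adjacent_ones z" and n: "length (rep_word z) = n"
    by (auto simp: canonical_fib_rep_def successively_conv_nth length_rep_word)
  from prefix_rep_word_fstd[OF z] obtain t where "fstd (length z) = rep_word z @ t"
    by (auto elim: prefixE)
  with n show ?thesis
    using fib_prefix_eq_take[of n "length z"] by simp
qed

lemma rep_word_eq_snocD:
  "(rep_word z = u @ [b] \<longrightarrow> (\<exists>w. u = fib_morph (rep_word w) @ [a]))
   \<and> (rep_word z = u @ [a] \<longrightarrow> (\<exists>w. u = rep_word w))"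
proof (induction z arbitrary: u rule: rev_induct)
  case (snoc c z)
  show ?case
  proof (cases c)
    case True
    show ?thesis
    proof (intro conjI impI)
      assume "rep_word (z @ [c]) = u @ [b]"
      with True show "\<exists>w. u = fib_morph (rep_word w) @ [a]" by (simp add: rep_word_snoc)
    next
      assume "rep_word (z @ [c]) = u @ [a]"
      with True have "u = rep_word (z @ [False])" by (simp add: rep_word_snoc)
      then show "\<exists>w. u = rep_word w" by blast
    qed
  next
    case False
    then have z: "rep_word (z @ [c]) = fib_morph (rep_word z)" by (simp add: rep_word_snoc)
    show ?thesis
    proof (intro conjI impI)
      assume "rep_word (z @ [c]) = u @ [b]"
      with z obtain x' where "rep_word z = x' @ [a]" "u = fib_morph x' @ [a]"
        by (metis fib_morph_eq_snoc_b)
      with snoc.IH[of x'] show "\<exists>w. u = fib_morph (rep_word w) @ [a]" by auto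
    next
      assume "rep_word (z @ [c]) = u @ [a]"
      with z obtain x' where "rep_word z = x' @ [b]" "u = fib_morph x'"
        by (metis fib_morph_eq_snoc_a)
      with snoc.IH[of x'] obtain w where "u = rep_word (w @ [True, False])"
        by (auto simp: rep_word_append)
      then show "\<exists>w. u = rep_word w" by blast
    qed
  qed
qed simp

section \<open>The linear recurrences for \<open>V\<close>\<close>

definition V_rep :: "bool list \<Rightarrow> int" where
  "V_rep z = int (nfact (rep_word z))"

lemma V_eq_V_rep: "canonical_fib_rep z n \<Longrightarrow> int (V n) = V_rep z"
  by (simp add: V_eq_nfact fib_prefix_rep_word V_rep_def)

text \<open>Here the structure of the Fibonacci word enters: its prefixes never end in \<open>bb\<close>, and
  a final \<open>b\<close> always follows the image of a prefix and an \<open>a\<close>.\<close>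

lemma nfact_fib_morph_rep_word_snoc_b:
  "int (nfact (fib_morph (rep_word z) @ [b]))
     = int (nfact (fib_morph (rep_word z))) - int (nfact (rep_word z))"
proof (cases "rep_word z" rule: rev_cases)
  case Nil
  then show ?thesis by (simp add: nfact_b)
next
  case (snoc v c)
  show ?thesis
  proof (cases c)
    case a
    then show ?thesis
      using snoc nfact_snoc_bb[of "fib_morph v @ [a]"] nfact_fib_morph_snoc_a[of v] by simp
  next
    case b
    with snoc obtain w where v: "v = fib_morph (rep_word w) @ [a]"
      using rep_word_eq_snocD[of z v] by blast
    have "nfact (fib_morph (rep_word z) @ [b]) = nfact v"
      using snoc b v nfact_fib_morph_snoc_a[of v] nfact_fib_morph_snoc_b[of "rep_word w @ [b]"]
        nfact_snoc_bb[of "rep_word w"] by simp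
    moreover have "nfact (fib_morph (rep_word z)) = nfact (rep_word z) + nfact v"
      using snoc b v nfact_fib_morph_snoc_b[of v] nfact_fib_morph_snoc_a[of "fib_morph (rep_word w)"]
      by simp
    ultimately show ?thesis by simp
  qed
qed

text \<open>Each relation applies \<open>nfact_fib_morph_snoc_a\<close> or \<open>nfact_fib_morph_snoc_b\<close>
  to the word of the longest representation involved, written as an iterated image under
  \<open>fib_morph\<close>.\<close>

lemma V_rep_10: "V_rep (z @ [True, False]) = V_rep (z @ [True])"
  using nfact_fib_morph_snoc_a[of "fib_morph (rep_word z)"] by (simp add: V_rep_def rep_word_append)

lemma V_rep_1000: "V_rep (z @ [True, False, False, False]) = V_rep (z @ [True, False, False])"
  using nfact_fib_morph_snoc_a[of "fib_morph (fib_morph (fib_morph (rep_word z))) @ [a, b]"]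
  by (simp add: V_rep_def rep_word_append)

lemma V_rep_01: "V_rep (z @ [False, True]) = V_rep (z @ [False]) - V_rep z + V_rep (z @ [False, False])"
  using nfact_fib_morph_snoc_b[of "fib_morph (rep_word z)"] nfact_fib_morph_rep_word_snoc_b[of z]
  by (simp add: V_rep_def rep_word_append)

lemma V_rep_0100:
  "V_rep (z @ [False, True, False, False])
     = 2 * V_rep (z @ [False, False]) + V_rep (z @ [False, False, False]) - V_rep z"
proof -
  have "V_rep (z @ [False, True, False, False])
      = V_rep (z @ [False, True, False]) + V_rep (z @ [False, False, True, False])"
    using nfact_fib_morph_snoc_b[of "fib_morph (fib_morph (fib_morph (rep_word z))) @ [a]"]
    by (simp add: V_rep_def rep_word_append)
  then show ?thesis
    using V_rep_10[of "z @ [False]"] V_rep_10[of "z @ [False, False]"] V_rep_01[of z] V_rep_01[of "z @ [False]"]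
    by simp
qed

lemma V_rep_010000:
  "V_rep (z @ [False, True, False, False, False, False])
     = 2 * V_rep (z @ [False, False]) + 3 * V_rep (z @ [False, False, False])
       + V_rep (z @ [False, False, False, False]) - V_rep z - V_rep (z @ [False])"
proof -
  have "V_rep (z @ [False, True, False, False, False, False])
      = V_rep (z @ [False, True, False, False, False]) + V_rep (z @ [False, False, True, False, True, False])"
    using nfact_fib_morph_snoc_b
        [of "fib_morph (fib_morph (fib_morph (fib_morph (fib_morph (rep_word z))))) @ [a, b, a, a]"]
    by (simp add: V_rep_def rep_word_append)
  then show ?thesis
    using V_rep_1000[of "z @ [False]"] V_rep_10[of "z @ [False, False, True, False]"]
      V_rep_01[of "z @ [False, False, True]"] V_rep_10[of "z @ [False, False]"]
      V_rep_0100[of "z @ [False]"] V_rep_0100[of z]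
    by simp
qed

lemma V_rep_101010:
  "V_rep (z @ [True, False, True, False, True, False])
     = 3 * V_rep (z @ [True, False, True, False]) - V_rep (z @ [True, False])"
  using V_rep_10[of "z @ [True, False, True, False]"] V_rep_01[of "z @ [True, False, True]"]
    V_rep_10[of "z @ [True, False]"] V_rep_0100[of "z @ [True]"] V_rep_01[of "z @ [True]"]
    V_rep_10[of z] V_rep_1000[of z]
  by simp

lemma V_rep_00000:
  "V_rep (z @ [False, False, False, False, False])
     = V_rep z - V_rep (z @ [False]) - 3 * V_rep (z @ [False, False])
       + 3 * V_rep (z @ [False, False, False]) + V_rep (z @ [False, False, False, False])"
proof (cases "rep_word z" rule: rev_cases)
  case Nil
  then show ?thesis by (simp add: V_rep_def rep_word_append)
next
  case (snoc v c)
  show ?thesis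
  proof (cases c)
    case a
    have "V_rep (z @ [False]) = V_rep z"
      using snoc a nfact_fib_morph_snoc_a[of v] by (simp add: V_rep_def rep_word_append)
    moreover have "V_rep (z @ [False, False, False]) = V_rep (z @ [False, False])"
      using snoc a nfact_fib_morph_snoc_a[of "fib_morph (fib_morph v) @ [a, b]"]
      by (simp add: V_rep_def rep_word_append)
    moreover have "V_rep (z @ [False, False, False, False, False]) = V_rep (z @ [False, False, False, False])"
      using snoc a
        nfact_fib_morph_snoc_a[of "fib_morph (fib_morph (fib_morph (fib_morph v))) @ [a, b, a, a, b, a, b]"]
      by (simp add: V_rep_def rep_word_append)
    ultimately show ?thesis by simp
  next
    case b
    with snoc obtain w where v: "v = fib_morph (rep_word w) @ [a]"
      using rep_word_eq_snocD[of z v] by blast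
    have "V_rep (z @ [False]) = V_rep z + V_rep (w @ [True, False])"
      using snoc b v nfact_fib_morph_snoc_b[of v] by (simp add: V_rep_def rep_word_append)
    moreover have "V_rep (z @ [False, False, False]) = V_rep (z @ [False, False]) + V_rep (w @ [True, False, True, False])"
      using snoc b v nfact_fib_morph_snoc_b[of "fib_morph (fib_morph v) @ [a]"]
      by (simp add: V_rep_def rep_word_append)
    moreover have "V_rep (z @ [False, False, False, False, False])
        = V_rep (z @ [False, False, False, False]) + V_rep (w @ [True, False, True, False, True, False])"
      using snoc b v nfact_fib_morph_snoc_b[of "fib_morph (fib_morph (fib_morph (fib_morph v))) @ [a, b, a, a]"]
      by (simp add: V_rep_def rep_word_append)
    ultimately show ?thesis using V_rep_101010[of w] by simp
  qed
qed

section \<open>The linear representation\<close>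

lemma mat_morph_Nil [simp]: "mat_morph d \<rho> [] = 1\<^sub>m d"
  by (simp add: mat_morph_def)

lemma mat_morph_Cons [simp]: "mat_morph d \<rho> (c # w) = \<rho> c * mat_morph d \<rho> w"
  by (simp add: mat_morph_def)

lemma mat_morph_carrier: "(\<And>c. \<rho> c \<in> carrier_mat d d) \<Longrightarrow> mat_morph d \<rho> w \<in> carrier_mat d d"
  by (induction w) (auto intro: mult_carrier_mat)

lemma mat_morph_snoc:
  assumes "\<And>c. \<rho> c \<in> carrier_mat d d"
  shows "mat_morph d \<rho> (w @ [c]) = mat_morph d \<rho> w * \<rho> c"
proof (induction w)
  case Nil
  then show ?case using assms[of c] by simp
next
  case (Cons c' w)
  have "mat_morph d \<rho> w \<in> carrier_mat d d" by (rule mat_morph_carrier[of \<rho> d, OF assms])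
  with Cons.IH show ?case using assoc_mult_mat[OF assms[of c'] _ assms[of c]] by simp
qed

lemma mat_morph_transpose:
  assumes "\<And>c. \<rho> c \<in> carrier_mat d d"
  shows "mat_morph d (\<lambda>c. (\<rho> c)\<^sup>T) w = (mat_morph d \<rho> (rev w))\<^sup>T"
  by (induction w)
     (simp_all add: mat_morph_snoc[OF assms] transpose_mult[OF mat_morph_carrier[of \<rho> d, OF assms] assms])

lemma fib_regular_if_reversed:
  assumes v: "v \<in> carrier_mat 1 d" and w: "w \<in> carrier_mat d 1" and \<rho>: "\<And>c. \<rho> c \<in> carrier_mat d d"
    and s: "\<And>z n. canonical_fib_rep z n \<Longrightarrow> s n = (v * mat_morph d \<rho> (rev z) * w) $$ (0, 0)"
  shows "fib_regular s"
  unfolding fib_regular_def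
proof (intro exI conjI allI impI)
  show "w\<^sup>T \<in> carrier_mat 1 d" "v\<^sup>T \<in> carrier_mat d 1" "(\<rho> c)\<^sup>T \<in> carrier_mat d d" for c
    using v w \<rho> by simp_all
  fix z n assume z: "canonical_fib_rep z n"
  let ?M = "mat_morph d \<rho> (rev z)"
  have M: "?M \<in> carrier_mat d d" by (rule mat_morph_carrier[of \<rho> d, OF \<rho>])
  have "(v * ?M * w)\<^sup>T = w\<^sup>T * (?M\<^sup>T * v\<^sup>T)"
    by (simp only: transpose_mult[OF mult_carrier_mat[OF v M] w] transpose_mult[OF v M])
  also have "\<dots> = w\<^sup>T * mat_morph d (\<lambda>c. (\<rho> c)\<^sup>T) z * v\<^sup>T"
    using v w M by (simp add: mat_morph_transpose[OF \<rho>])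
  finally have "w\<^sup>T * mat_morph d (\<lambda>c. (\<rho> c)\<^sup>T) z * v\<^sup>T = (v * ?M * w)\<^sup>T" ..
  moreover have "(v * ?M * w)\<^sup>T $$ (0, 0) = (v * ?M * w) $$ (0, 0)"
    using carrier_matD[OF v] carrier_matD[OF w] by simp
  ultimately show "s n = (w\<^sup>T * mat_morph d (\<lambda>c. (\<rho> c)\<^sup>T) z * v\<^sup>T) $$ (0, 0)"
    using s[OF z] by auto
qed

definition col8 :: "int list \<Rightarrow> int mat" where
  "col8 xs = mat_of_cols_list 8 [xs]"

lemma gamma0_mult_col8:
  "gamma0 * col8 [x1, x2, x3, x4, x5, x6, x7, x8] =
   col8 [x2, x4, x2 + x4 - x1, x5, x7, 2 * x4 + x5 - x1, x1 - x2 - 3 * x4 + 3 * x5 + x7,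
         2 * x4 + 3 * x5 + x7 - x1 - x2]"
  apply (rule eq_matI)
    apply (simp_all add: col8_def gamma0_def mat_of_rows_list_def mat_of_cols_list_def scalar_prod_def
      less_Suc_eq numeral_eq_Suc)
  apply (auto simp: less_Suc_eq numeral_eq_Suc)
  done

lemma gamma1_mult_col8:
  "gamma1 * col8 [x1, x2, x3, x4, x5, x6, x7, x8] = col8 [x3, x3, 0, x6, x6, 0, x8, 0]"
  apply (rule eq_matI)
    apply (simp_all add: col8_def gamma1_def mat_of_rows_list_def mat_of_cols_list_def scalar_prod_def
      less_Suc_eq numeral_eq_Suc)
  apply (auto simp: less_Suc_eq numeral_eq_Suc)
  done

lemma t_vec_mult_col8: "(t_vec * col8 [x1, x2, x3, x4, x5, x6, x7, x8]) $$ (0, 0) = x1"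
  by (simp add: col8_def t_vec_def mat_of_rows_list_def mat_of_cols_list_def scalar_prod_def numeral_eq_Suc)

lemma gamma_carrier [simp]: "gamma c \<in> carrier_mat 8 8"
  unfolding gamma_def by (rule carrier_matI) (simp_all add: gamma0_def gamma1_def mat_of_rows_list_def)

lemma mat_morph_gamma_carrier [simp]: "mat_morph 8 gamma w \<in> carrier_mat 8 8"
  by (rule mat_morph_carrier) simp

lemma t_vec_carrier: "t_vec \<in> carrier_mat 1 8"
  by (simp add: t_vec_def mat_of_rows_list_def)

lemma u_vec_carrier: "u_vec \<in> carrier_mat 8 1"
  by (simp add: u_vec_def mat_of_cols_list_def)

text \<open>Non-canonical words get the value \<open>0\<close>: this is what the zero rows of \<open>gamma1\<close> produce.\<close>

definition V_canon :: "bool list \<Rightarrow> int" where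
  "V_canon z = (if no_adjacent_ones z then V_rep z else 0)"

definition state_vec :: "bool list \<Rightarrow> int list" where
  "state_vec z = map (\<lambda>s. V_canon (z @ s))
     [[], [False], [True], [False, False], [False, False, False], [True, False, False],
      [False, False, False, False], [True, False, False, False, False]]"

lemma V_canon_append_Cons:
  assumes "no_adjacent_ones (z @ [c])" "no_adjacent_ones (c # s)"
  shows "V_canon (z @ c # s) = V_rep (z @ c # s)"
  using assms by (auto simp: V_canon_def successively_append_iff)

lemma V_canon_True_True: "V_canon (z @ True # True # s) = 0"
  by (simp add: V_canon_def successively_append_iff)

lemma state_vec_Nil: "state_vec [] = [1, 1, 1, 1, 1, 2, 1, 4]"
proof -
  have "V_rep [True] = 1" "V_rep [True, False, False] = 2" "V_rep [True, False, False, False, False] = 4"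
    using V_rep_01[of "[]"] V_rep_0100[of "[]"] V_rep_010000[of "[]"] by (simp_all add: V_rep_def)
  then show ?thesis by (simp add: state_vec_def V_canon_def V_rep_def)
qed

lemma gamma_mult_state_vec:
  assumes "no_adjacent_ones (z @ [c])"
  shows "gamma c * col8 (state_vec z) = col8 (state_vec (z @ [c]))"
proof (cases c)
  case False
  with assms have "no_adjacent_ones z" by (simp add: successively_append_iff)
  then show ?thesis
    using False V_canon_append_Cons[OF assms]
      V_rep_01[of z] V_rep_0100[of z] V_rep_00000[of z] V_rep_010000[of z]
    by (simp add: gamma_def state_vec_def gamma0_mult_col8 V_canon_def[of z],
        intro arg_cong[where f = col8], simp)
next
  case True
  then show ?thesis
    using V_canon_append_Cons[OF assms] V_rep_10[of z] V_rep_1000[of z]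
    by (simp add: gamma_def state_vec_def gamma1_mult_col8 V_canon_True_True)
qed

lemma mat_morph_gamma_mult_u_vec:
  "no_adjacent_ones z \<Longrightarrow> mat_morph 8 gamma (rev z) * u_vec = col8 (state_vec z)"
proof (induction z rule: rev_induct)
  case Nil
  have "u_vec = col8 (state_vec [])" by (simp add: state_vec_Nil u_vec_def col8_def)
  then show ?case using left_mult_one_mat[OF u_vec_carrier] by simp
next
  case (snoc c z)
  then have "mat_morph 8 gamma (rev z) * u_vec = col8 (state_vec z)"
    by (simp add: successively_append_iff)
  moreover have "mat_morph 8 gamma (rev (z @ [c])) * u_vec = gamma c * (mat_morph 8 gamma (rev z) * u_vec)"
    by (simp add: assoc_mult_mat[OF gamma_carrier mat_morph_gamma_carrier u_vec_carrier])
  ultimately show ?case using gamma_mult_state_vec[OF snoc.prems] by simp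
qed

lemma V_eq_matrix_product:
  assumes z: "canonical_fib_rep z n"
  shows "(t_vec * mat_morph 8 gamma (rev z) * u_vec) $$ (0, 0) = int (V n)"
proof -
  from z have "no_adjacent_ones z" by (simp add: canonical_fib_rep_def successively_conv_nth)
  then have "t_vec * mat_morph 8 gamma (rev z) * u_vec = t_vec * col8 (state_vec z)"
    by (simp add: assoc_mult_mat[OF t_vec_carrier mat_morph_gamma_carrier u_vec_carrier]
        mat_morph_gamma_mult_u_vec)
  with \<open>no_adjacent_ones z\<close> show ?thesis
    by (simp add: state_vec_def t_vec_mult_col8 V_canon_def V_eq_V_rep[OF z])
qed

theorem theorem2:
  shows "(\<forall>n z. canonical_fib_rep z n \<longrightarrow>
            (t_vec * mat_morph 8 gamma (rev z) * u_vec) $$ (0, 0) = int (V n))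
         \<and> fib_regular (\<lambda>n. int (V n))"
proof
  show "\<forall>n z. canonical_fib_rep z n \<longrightarrow> (t_vec * mat_morph 8 gamma (rev z) * u_vec) $$ (0, 0) = int (V n)"
    using V_eq_matrix_product by blast
  show "fib_regular (\<lambda>n. int (V n))"
    by (rule fib_regular_if_reversed[where \<rho> = gamma, OF t_vec_carrier u_vec_carrier gamma_carrier])
       (simp add: V_eq_matrix_product)
qed

end
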